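(* There is an absolute constant $\beta>0$ and $n_0$ such that the following holds for all $n\ge n_0$. Let $F$ be an $n$-vertex graph and $G\subseteq K_n$ an $n$-vertex graph, and suppose that $F$ is guest-good with value $t$ and $G$ is host-$\beta$-good. Then there is a copy $F_0$ of $F$ in $K_n$ with $\left||E(F_0)\cap E(G)|-\frac{e(F)}{2}\right|\ge\beta t$.
   Context: For a vertex $u$ and set $S$, $N_S(u)$ is the set of neighbors of $u$ in $S$ and $d_S(u)=|N_S(u)|$. An $n$-vertex graph $F$ is guest-good with value $t$ if there is a partition $V(F)=U\cup V$ with $|U|=\lfloor n/2\rfloor$, distinct vertices $u_1,u_1',\dots,u_m,u_m'\in U$ with $m\le0.05n$, and integers $d_1,\dots,d_m\ge1$, such that $t=\sum_{i=1}^m\sqrt{d_i}$ and for every $i\in[m]$: (1) $|N_V(u_i)\setminus N_V(u_i')|\ge0.01d_i$; (2) $|N_V(u_i)\setminus N_V(u_i')|\le\frac23|V|$ and $|N_V(u_i')\setminus N_V(u_i)|\le\frac23|V|$; (3) $U$ is an independent set in $F$, or $|d_V(u_i)-d_V(u_i')|\le20\sqrt{d_i}$. An $n$-vertex graph $G$ is host-$\beta$-good if there is a partition $V(G)=X\cup Y$ with $|X|=\lfloor n/2\rfloor$ and distinct vertices $x_1,x_1',\dots,x_m,x_m'\in X$ with $m=0.05n$, such that for every $1\le i\le m$: (1) $|d_Y(x_i)-d_Y(x_i')|\le\beta n$; (2) $0.02|Y|\le|N_Y(x_i)\triangle N_Y(x_i')|\le0.98|Y|$; (3) $0.1|Y|\le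 d_Y(x_i),d_Y(x_i')\le0.9|Y|$. Degrees for $F$ are in $F$ and for $G$ are in $G$. A copy of $F$ in $K_n$ is a subgraph of $K_n$ isomorphic to $F$. *)

theory Defs
  imports Complex_Main
begin

definition simple_graph :: "nat \<Rightarrow> nat set set \<Rightarrow> bool" where
  "simple_graph n E \<longleftrightarrow> E \<subseteq> {e. \<exists>u v. e = {u, v} \<and> u \<noteq> v \<and> u < n \<and> v < n}"

definition nbrs :: "nat set set \<Rightarrow> nat set \<Rightarrow> nat \<Rightarrow> nat set" where
  "nbrs E S u = {v \<in> S. {u, v} \<in> E}"

definition deg :: "nat set set \<Rightarrow> nat set \<Rightarrow> nat \<Rightarrow> nat" where
  "deg E S u = card (nbrs E S u)"

definition independent :: "nat set set \<Rightarrow> nat set \<Rightarrow> bool" where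
  "independent E S \<longleftrightarrow> (\<forall>u\<in>S. \<forall>v\<in>S. {u, v} \<notin> E)"

definition guest_good :: "nat \<Rightarrow> nat set set \<Rightarrow> real \<Rightarrow> bool" where
  "guest_good n F t \<longleftrightarrow>
    (\<exists>U V m (u :: nat \<Rightarrow> nat) (u' :: nat \<Rightarrow> nat) (d :: nat \<Rightarrow> nat).
       U \<union> V = {..<n} \<and> U \<inter> V = {} \<and> card U = n div 2 \<and>
       real m \<le> 0.05 * real n \<and>
       distinct (map u [0..<m] @ map u' [0..<m]) \<and>
       (\<forall>i<m. u i \<in> U \<and> u' i \<in> U \<and> d i \<ge> 1) \<and>
       t = (\<Sum>i<m. sqrt (real (d i))) \<and>
       (\<forall>i<m.
          real (card (nbrs F V (u i) - nbrs F V (u' i))) \<ge> 0.01 * real (d i) \<and>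
          real (card (nbrs F V (u i) - nbrs F V (u' i))) \<le> 2/3 * real (card V) \<and>
          real (card (nbrs F V (u' i) - nbrs F V (u i))) \<le> 2/3 * real (card V) \<and>
          (independent F U \<or>
           \<bar>real (deg F V (u i)) - real (deg F V (u' i))\<bar> \<le> 20 * sqrt (real (d i)))))"

definition host_good :: "nat \<Rightarrow> real \<Rightarrow> nat set set \<Rightarrow> bool" where
  "host_good n \<beta> G \<longleftrightarrow>
    (\<exists>X Y (x :: nat \<Rightarrow> nat) (x' :: nat \<Rightarrow> nat).
       let m = nat \<lfloor>0.05 * real n\<rfloor> in
       X \<union> Y = {..<n} \<and> X \<inter> Y = {} \<and> card X = n div 2 \<and>
       distinct (map x [0..<m] @ map x' [0..<m]) \<and>
       (\<forall>i<m. x i \<in> X \<and> x' i \<in> X \<and>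
          \<bar>real (deg G Y (x i)) - real (deg G Y (x' i))\<bar> \<le> \<beta> * real n \<and>
          0.02 * real (card Y) \<le> real (card (nbrs G Y (x i) \<union> nbrs G Y (x' i)
                                   - nbrs G Y (x i) \<inter> nbrs G Y (x' i))) \<and>
          real (card (nbrs G Y (x i) \<union> nbrs G Y (x' i)
                     - nbrs G Y (x i) \<inter> nbrs G Y (x' i))) \<le> 0.98 * real (card Y) \<and>
          0.1 * real (card Y) \<le> real (deg G Y (x i)) \<and>
          real (deg G Y (x i)) \<le> 0.9 * real (card Y) \<and>
          0.1 * real (card Y) \<le> real (deg G Y (x' i)) \<and>
          real (deg G Y (x' i)) \<le> 0.9 * real (card Y)))"

definition is_copy :: "nat \<Rightarrow> nat set set \<Rightarrow> nat set set \<Rightarrow> bool" where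
  "is_copy n F F0 \<longleftrightarrow> (\<exists>\<pi>. bij_betw \<pi> {..<n} {..<n} \<and> F0 = (\<lambda>e. \<pi> ` e) ` F)"

end

theory Submission
  imports Defs "HOL-Library.FuncSet" "HOL-Combinatorics.Transposition"
begin

text \<open>Fix a bijection \<open>\<rho> : U \<rightarrow> X\<close> with \<open>\<rho> (u i) = x i\<close> and \<open>\<rho> (u' i) = x' i\<close>. A bijection
  \<open>\<sigma> : V \<rightarrow> Y\<close> and a set \<open>S\<close> of indices give the copy of \<open>F\<close> that is \<open>\<sigma>\<close> on \<open>V\<close> and \<open>\<rho>\<close>
  followed by the swaps \<open>x i \<leftrightarrow> x' i\<close> (\<open>i \<in> S\<close>) on \<open>U\<close>. In the alternating sum of the
  common edges with \<open>G\<close> of the copies for \<open>(\<sigma>\<^sub>1, S)\<close>, \<open>(\<sigma>\<^sub>2, S)\<close>, \<open>(\<sigma>\<^sub>1, S\<^sup>c)\<close>, \<open>(\<sigma>\<^sub>2, S\<^sup>c)\<close>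
  everything cancels except \<open>\<Sum>\<^sub>i \<plusminus>(X\<^sub>i \<sigma>\<^sub>1 - X\<^sub>i \<sigma>\<^sub>2)\<close>, where
  \<open>X\<^sub>i \<sigma> = \<Sum>\<^sub>b\<^sub>\<in>\<^sub>V (F(u i, b) - F(u' i, b)) (G(x' i, \<sigma> b) - G(x i, \<sigma> b))\<close>.

  Each \<open>X\<^sub>i\<close> is anticoncentrated for uniformly random \<open>\<sigma>\<close>: pairing vertices \<open>a\<close> of
  \<open>N(u i) - N(u' i)\<close> with vertices \<open>z\<close> outside it and averaging over the transpositions of these
  disjoint pairs turns \<open>X\<^sub>i\<close> into a Rademacher sum, and a Khintchine-type inequality gives
  \<open>E |X\<^sub>i - K| \<ge> c sqrt (d i)\<close> for every \<open>K\<close>. Hence some \<open>\<sigma>\<^sub>1\<close> has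
  \<open>\<Sum>\<^sub>i |X\<^sub>i \<sigma>\<^sub>1 - X\<^sub>i \<sigma>\<^sub>2| \<ge> c t\<close>; with \<open>S = {i. X\<^sub>i \<sigma>\<^sub>2 \<le> X\<^sub>i \<sigma>\<^sub>1}\<close> one of the four copies deviates
  from \<open>e(F) / 2\<close> by at least \<open>c t / 4\<close>. This works with \<open>\<beta> = 1 / 100000\<close> and \<open>n\<^sub>0 = 0\<close>; of the
  goodness conditions only the lower bound in (1) and the first upper bound in (2) for \<open>F\<close>, and (1)
  and the lower bound in (2) for \<open>G\<close>, are needed, and \<open>G\<close> need not be simple.\<close>

section \<open>Rademacher averages\<close>

text \<open>\<open>sign_avg ws f c\<close> is the mean of \<open>f (c + \<Sum>\<^sub>j \<epsilon>\<^sub>j w\<^sub>j)\<close> over the \<open>2 ^ length ws\<close> choices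
  of signs \<open>\<epsilon>\<^sub>j \<in> {-1, 1}\<close>.\<close>

fun sign_avg :: "real list \<Rightarrow> (real \<Rightarrow> real) \<Rightarrow> real \<Rightarrow> real" where
  "sign_avg [] f c = f c"
| "sign_avg (w # ws) f c = (sign_avg ws f (c + w) + sign_avg ws f (c - w)) / 2"

lemma sign_avg_linear:
  "sign_avg ws (\<lambda>s. a * f s + b * g s) c = a * sign_avg ws f c + b * sign_avg ws g c"
  by (induction ws arbitrary: c) (simp_all add: algebra_simps add_divide_distrib)

lemma sign_avg_mono: "(\<And>s. f s \<le> g s) \<Longrightarrow> sign_avg ws f c \<le> sign_avg ws g c"
  by (induction ws arbitrary: c) (simp_all add: add_mono divide_right_mono)

lemma sign_avg_shift: "sign_avg ws (\<lambda>s. f (s + e)) c = sign_avg ws f (c + e)"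
  by (induction ws arbitrary: c) (simp_all add: algebra_simps)

lemma sign_avg_power2: "sign_avg ws (\<lambda>s. s\<^sup>2) c = c\<^sup>2 + (\<Sum>w\<leftarrow>ws. w\<^sup>2)"
  by (induction ws arbitrary: c) (simp_all add: power2_eq_square algebra_simps)

lemma sign_avg_power4_le:
  "sign_avg ws (\<lambda>s. s ^ 4) c \<le> c ^ 4 + 6 * c\<^sup>2 * (\<Sum>w\<leftarrow>ws. w\<^sup>2) + 3 * (\<Sum>w\<leftarrow>ws. w\<^sup>2)\<^sup>2"
proof (induction ws arbitrary: c)
  case Nil
  then show ?case by simp
next
  case (Cons w ws)
  define Q where "Q = (\<Sum>w\<leftarrow>ws. w\<^sup>2)"
  have "sign_avg (w # ws) (\<lambda>s. s ^ 4) c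
      \<le> ((c + w) ^ 4 + 6 * (c + w)\<^sup>2 * Q + 3 * Q\<^sup>2 + ((c - w) ^ 4 + 6 * (c - w)\<^sup>2 * Q + 3 * Q\<^sup>2)) / 2"
    using Cons[of "c + w"] Cons[of "c - w"] by (simp add: Q_def)
  also have "\<dots> = c ^ 4 + 6 * c\<^sup>2 * (w\<^sup>2 + Q) + 3 * (w\<^sup>2 + Q)\<^sup>2 - 2 * w ^ 4"
    by (simp add: power2_eq_square power4_eq_xxxx algebra_simps)
  also have "\<dots> \<le> c ^ 4 + 6 * c\<^sup>2 * (w\<^sup>2 + Q) + 3 * (w\<^sup>2 + Q)\<^sup>2"
    by simp
  finally show ?case by (simp add: Q_def)
qed

lemma abs_ge_quartic_minorant:
  fixes s T :: real
  assumes "T > 0"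
  shows "s\<^sup>2 / T - s ^ 4 / (4 * T ^ 3) \<le> \<bar>s\<bar>"
proof -
  define x where "x = \<bar>s\<bar>"
  have "0 \<le> x * (x * (x - 2 * T)\<^sup>2 + 4 * T * (x - T)\<^sup>2)"
    using assms by (simp add: x_def)
  also have "\<dots> = 4 * T ^ 3 * x - 4 * T\<^sup>2 * x\<^sup>2 + x ^ 4"
    by (simp add: power2_eq_square power3_eq_cube power4_eq_xxxx algebra_simps)
  finally have "4 * T\<^sup>2 * x\<^sup>2 - x ^ 4 \<le> 4 * T ^ 3 * x"
    by simp
  moreover have "s\<^sup>2 / T - s ^ 4 / (4 * T ^ 3) = (4 * T\<^sup>2 * x\<^sup>2 - x ^ 4) / (4 * T ^ 3)"
    using assms by (simp add: x_def power2_eq_square power3_eq_cube field_simps)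
  ultimately show ?thesis
    using assms by (simp add: x_def pos_divide_le_eq mult.commute)
qed

lemma sign_avg_nonneg: "(\<And>s. 0 \<le> f s) \<Longrightarrow> 0 \<le> sign_avg ws f c"
  by (induction ws arbitrary: c) simp_all

lemma sign_avg_abs_ge_moments:
  fixes c T :: real and ws :: "real list"
  assumes "T > 0"
  defines "R \<equiv> c\<^sup>2 + (\<Sum>w\<leftarrow>ws. w\<^sup>2)"
  shows "R / T - 3 * R\<^sup>2 / (4 * T ^ 3) \<le> sign_avg ws abs c"
proof -
  define Q where "Q = (\<Sum>w\<leftarrow>ws. w\<^sup>2)"
  have "c ^ 4 + 6 * c\<^sup>2 * Q + 3 * Q\<^sup>2 \<le> 3 * R\<^sup>2"
    using zero_le_power2[of "c\<^sup>2"] by (simp add: R_def Q_def power2_eq_square power4_eq_xxxx algebra_simps)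
  then have "sign_avg ws (\<lambda>s. s ^ 4) c \<le> 3 * R\<^sup>2"
    using sign_avg_power4_le[of ws c] unfolding Q_def by linarith
  then have "R / T - 3 * R\<^sup>2 / (4 * T ^ 3) \<le> R / T - sign_avg ws (\<lambda>s. s ^ 4) c / (4 * T ^ 3)"
    using assms(1) by (simp add: divide_right_mono)
  also have "\<dots> = sign_avg ws (\<lambda>s. (1 / T) * s\<^sup>2 + (- 1 / (4 * T ^ 3)) * s ^ 4) c"
    using sign_avg_linear[of ws "1 / T" "\<lambda>s. s\<^sup>2" "- 1 / (4 * T ^ 3)" "\<lambda>s. s ^ 4" c]
    by (simp add: sign_avg_power2 R_def)
  also have "\<dots> \<le> sign_avg ws abs c"
    by (rule sign_avg_mono) (use abs_ge_quartic_minorant[OF assms(1)] in auto)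
  finally show ?thesis .
qed

text \<open>A Khintchine-type inequality: \<open>T = 2 sqrt R\<close> in the moment bound gives
  \<open>sqrt R / 2 - 3 sqrt R / 32\<close>.\<close>

lemma sign_avg_abs_ge: "13 / 32 * sqrt (\<Sum>w\<leftarrow>ws. w\<^sup>2) \<le> sign_avg ws abs c"
proof -
  define R where "R = c\<^sup>2 + (\<Sum>w\<leftarrow>ws. w\<^sup>2)"
  have "13 / 32 * sqrt (\<Sum>w\<leftarrow>ws. w\<^sup>2) \<le> 13 / 32 * sqrt R"
    by (simp add: R_def)
  moreover have "13 / 32 * sqrt R \<le> sign_avg ws abs c"
  proof (cases "R = 0")
    case True
    then show ?thesis
      by (simp add: sign_avg_nonneg)
  next
    case False
    define r where "r = sqrt R"
    have "R \<ge> 0"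
      unfolding R_def by (intro add_nonneg_nonneg sum_list_nonneg) auto
    with False have "r > 0" "R = r\<^sup>2"
      by (simp_all add: r_def)
    then have "13 / 32 * sqrt R = R / (2 * r) - 3 * R\<^sup>2 / (4 * (2 * r) ^ 3)"
      by (simp add: r_def[symmetric] power2_eq_square power3_eq_cube field_simps)
    also have "\<dots> \<le> sign_avg ws abs c"
      using sign_avg_abs_ge_moments[of "2 * r" c ws] \<open>r > 0\<close> by (simp add: R_def)
    finally show ?thesis .
  qed
  ultimately show ?thesis
    by linarith
qed

section \<open>Averaging over transpositions\<close>

text \<open>\<open>swap_avg ps \<phi> \<sigma>\<close> is the mean of \<open>\<phi> (\<sigma> \<circ> \<tau>)\<close> over the \<open>2 ^ length ps\<close> products \<open>\<tau>\<close> of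
  sublists of the transpositions listed in \<open>ps\<close>.\<close>

fun swap_avg :: "('a \<times> 'a) list \<Rightarrow> (('a \<Rightarrow> 'b) \<Rightarrow> real) \<Rightarrow> ('a \<Rightarrow> 'b) \<Rightarrow> real" where
  "swap_avg [] \<phi> \<sigma> = \<phi> \<sigma>"
| "swap_avg (p # ps) \<phi> \<sigma> = (swap_avg ps \<phi> \<sigma> + swap_avg ps \<phi> (\<sigma> \<circ> transpose (fst p) (snd p))) / 2"

lemma sum_swap_avg:
  assumes "\<And>a z \<sigma>. (a, z) \<in> set ps \<Longrightarrow> \<sigma> \<in> B \<Longrightarrow> \<sigma> \<circ> transpose a z \<in> B"
  shows "(\<Sum>\<sigma>\<in>B. swap_avg ps \<phi> \<sigma>) = (\<Sum>\<sigma>\<in>B. \<phi> \<sigma>)"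
  using assms
proof (induction ps)
  case Nil
  then show ?case by simp
next
  case (Cons p ps)
  obtain a z where p: "p = (a, z)"
    by fastforce
  have closed: "\<sigma> \<circ> transpose a z \<in> B" if "\<sigma> \<in> B" for \<sigma>
    by (rule Cons.prems) (simp_all add: p that)
  have "bij_betw (\<lambda>\<sigma>. \<sigma> \<circ> transpose a z) B B"
    by (rule bij_betw_byWitness[where f' = "\<lambda>\<sigma>. \<sigma> \<circ> transpose a z"])
      (simp_all add: closed image_subset_iff comp_assoc)
  then have "(\<Sum>\<sigma>\<in>B. swap_avg ps \<phi> (\<sigma> \<circ> transpose a z)) = (\<Sum>\<sigma>\<in>B. swap_avg ps \<phi> \<sigma>)"
    by (rule sum.reindex_bij_betw)
  then show ?case
    using Cons by (simp add: p sum.distrib flip: sum_divide_distrib)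
qed

definition lin_stat :: "'a set \<Rightarrow> ('a \<Rightarrow> real) \<Rightarrow> ('b \<Rightarrow> real) \<Rightarrow> ('a \<Rightarrow> 'b) \<Rightarrow> real" where
  "lin_stat V \<chi> g \<sigma> = (\<Sum>b\<in>V. \<chi> b * g (\<sigma> b))"

definition swap_change :: "('a \<Rightarrow> real) \<Rightarrow> ('b \<Rightarrow> real) \<Rightarrow> ('a \<Rightarrow> 'b) \<Rightarrow> 'a \<times> 'a \<Rightarrow> real" where
  "swap_change \<chi> g \<sigma> p = (\<chi> (fst p) - \<chi> (snd p)) * (g (\<sigma> (snd p)) - g (\<sigma> (fst p)))"

lemma lin_stat_comp_transpose:
  assumes "finite V" "a \<in> V" "z \<in> V" "a \<noteq> z"
  shows "lin_stat V \<chi> g (\<sigma> \<circ> transpose a z) = lin_stat V \<chi> g \<sigma> + swap_change \<chi> g \<sigma> (a, z)"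
proof -
  define W where "W = V - {a, z}"
  have V: "V = insert a (insert z W)" "a \<notin> insert z W" "z \<notin> W" "finite W"
    using assms by (auto simp: W_def)
  have "(\<Sum>b\<in>W. \<chi> b * g ((\<sigma> \<circ> transpose a z) b)) = (\<Sum>b\<in>W. \<chi> b * g (\<sigma> b))"
    by (rule sum.cong) (auto simp: W_def)
  then show ?thesis
    unfolding lin_stat_def swap_change_def V(1) using V(2-4) assms(4)
    by (simp add: algebra_simps)
qed

text \<open>Transpositions of disjoint pairs change \<open>lin_stat\<close> by independent amounts, so swap
  averaging is a Rademacher average centred at the midpoint.\<close>

lemma swap_avg_lin_stat:
  assumes "finite V" "distinct (map fst ps @ map snd ps)" "\<forall>(a, z)\<in>set ps. a \<in> V \<and> z \<in> V"
  shows "swap_avg ps (\<lambda>\<sigma>. f (lin_stat V \<chi> g \<sigma>)) \<sigma> =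
    sign_avg (map (\<lambda>p. swap_change \<chi> g \<sigma> p / 2) ps) f
      (lin_stat V \<chi> g \<sigma> + (\<Sum>p\<leftarrow>ps. swap_change \<chi> g \<sigma> p / 2))"
  using assms(2,3)
proof (induction ps arbitrary: \<sigma>)
  case Nil
  then show ?case by simp
next
  case (Cons p ps)
  obtain a z where p: "p = (a, z)"
    by fastforce
  have az: "a \<noteq> z" "a \<in> V" "z \<in> V"
    using Cons.prems p by auto
  have "swap_change \<chi> g (\<sigma> \<circ> transpose a z) q = swap_change \<chi> g \<sigma> q" if "q \<in> set ps" for q
  proof -
    have "fst q \<notin> {a, z}" "snd q \<notin> {a, z}"
      using that Cons.prems(1) p by auto
    then show ?thesis
      by (simp add: swap_change_def)
  qed
  then have unchanged: "map (\<lambda>q. swap_change \<chi> g (\<sigma> \<circ> transpose a z) q / 2) ps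
      = map (\<lambda>q. swap_change \<chi> g \<sigma> q / 2) ps"
    by simp
  have "distinct (map fst ps @ map snd ps)" "\<forall>(a, z)\<in>set ps. a \<in> V \<and> z \<in> V"
    using Cons.prems by auto
  note IH = Cons.IH[OF this]
  define D where "D = swap_change \<chi> g \<sigma> (a, z)"
  have "swap_avg ps (\<lambda>\<sigma>. f (lin_stat V \<chi> g \<sigma>)) (\<sigma> \<circ> transpose a z) =
      sign_avg (map (\<lambda>q. swap_change \<chi> g \<sigma> q / 2) ps) f
        (lin_stat V \<chi> g \<sigma> + D + (\<Sum>q\<leftarrow>ps. swap_change \<chi> g \<sigma> q / 2))"
    by (simp only: IH unchanged lin_stat_comp_transpose[OF assms(1) az(2,3,1)] D_def)
  moreover have "swap_avg ps (\<lambda>\<sigma>. f (lin_stat V \<chi> g \<sigma>)) \<sigma> =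
      sign_avg (map (\<lambda>q. swap_change \<chi> g \<sigma> q / 2) ps) f
        (lin_stat V \<chi> g \<sigma> + (\<Sum>q\<leftarrow>ps. swap_change \<chi> g \<sigma> q / 2))"
    by (rule IH)
  moreover have "lin_stat V \<chi> g \<sigma> + (D / 2 + R) + D / 2 = lin_stat V \<chi> g \<sigma> + D + R"
    and "lin_stat V \<chi> g \<sigma> + (D / 2 + R) - D / 2 = lin_stat V \<chi> g \<sigma> + R" for R
    by simp_all
  ultimately show ?case
    by (simp add: p D_def[symmetric] add_ac)
qed

section \<open>Anticoncentration for random bijections\<close>

text \<open>Bijections are taken extensional, so that there are only finitely many of them.\<close>

definition bijections :: "'a set \<Rightarrow> 'b set \<Rightarrow> ('a \<Rightarrow> 'b) set" where
  "bijections V Y = {\<sigma> \<in> V \<rightarrow>\<^sub>E Y. bij_betw \<sigma> V Y}"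

lemma comp_transpose_in_bijections:
  assumes "a \<in> V" "z \<in> V" "\<sigma> \<in> bijections V Y"
  shows "\<sigma> \<circ> transpose a z \<in> bijections V Y"
proof -
  have "bij_betw (\<sigma> \<circ> transpose a z) V Y"
    using assms bij_betw_trans[of "transpose a z" V V \<sigma> Y] by (simp add: bijections_def)
  moreover have "\<sigma> \<circ> transpose a z \<in> V \<rightarrow>\<^sub>E Y"
    using assms by (auto simp: bijections_def PiE_iff extensional_def transpose_def)
  ultimately show ?thesis
    by (simp add: bijections_def)
qed

lemma finite_bijections: "finite V \<Longrightarrow> finite Y \<Longrightarrow> finite (bijections V Y)"
  unfolding bijections_def by (rule finite_subset[of _ "V \<rightarrow>\<^sub>E Y"]) (auto intro: finite_PiE)

lemma bijections_nonempty:
  assumes "finite V" "finite Y" "card V = card Y"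
  shows "bijections V Y \<noteq> {}"
proof -
  obtain f where "bij_betw f V Y"
    using finite_same_card_bij[OF assms] by blast
  then have "restrict f V \<in> bijections V Y"
    by (auto simp: bijections_def bij_betw_def inj_on_def image_def)
  then show ?thesis
    by blast
qed

lemma of_nat_card_filter:
  "finite A \<Longrightarrow> of_nat (card {x \<in> A. P x}) = (\<Sum>x\<in>A. if P x then 1 else 0)"
  by (simp add: sum.If_cases Int_def conj_commute)

lemma card_separating_bijections_transpose:
  assumes "a \<in> V" "z \<in> V" "w \<in> V" "a \<noteq> z" "a \<noteq> w"
  shows "card {\<sigma> \<in> bijections V Y. g (\<sigma> a) \<noteq> g (\<sigma> w)} = card {\<sigma> \<in> bijections V Y. g (\<sigma> a) \<noteq> g (\<sigma> z)}"
proof (rule bij_betw_same_card[of "\<lambda>\<sigma>. \<sigma> \<circ> transpose z w"])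
  show "bij_betw (\<lambda>\<sigma>. \<sigma> \<circ> transpose z w)
      {\<sigma> \<in> bijections V Y. g (\<sigma> a) \<noteq> g (\<sigma> w)} {\<sigma> \<in> bijections V Y. g (\<sigma> a) \<noteq> g (\<sigma> z)}"
    by (rule bij_betw_byWitness[where f' = "\<lambda>\<sigma>. \<sigma> \<circ> transpose z w"])
      (use assms in \<open>auto simp: comp_assoc comp_transpose_in_bijections transpose_apply_other\<close>)
qed

lemma card_separated_partners:
  assumes "bij_betw \<sigma> V Y" "a \<in> V"
  shows "card {w \<in> V - {a}. g (\<sigma> a) \<noteq> g (\<sigma> w)} = card {y \<in> Y. g y \<noteq> g (\<sigma> a)}"
proof -
  have "{w \<in> V - {a}. g (\<sigma> a) \<noteq> g (\<sigma> w)} = {w \<in> V. g (\<sigma> w) \<noteq> g (\<sigma> a)}"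
    by auto
  moreover have "card {w \<in> V. g (\<sigma> w) \<noteq> g (\<sigma> a)} = card (\<sigma> ` {w \<in> V. g (\<sigma> w) \<noteq> g (\<sigma> a)})"
    using assms(1) by (intro card_image[symmetric]) (auto simp: bij_betw_def inj_on_def)
  moreover have "\<sigma> ` {w \<in> V. g (\<sigma> w) \<noteq> g (\<sigma> a)} = {y \<in> Y. g y \<noteq> g (\<sigma> a)}"
    using assms by (auto simp: bij_betw_def)
  ultimately show ?thesis
    by simp
qed

text \<open>Double counting over the partners \<open>w\<close> of \<open>a\<close>: by the previous two lemmas, each of the
  \<open>card Y - 1\<close> pairs \<open>(a, w)\<close> is separated by as many bijections as \<open>(a, z)\<close>.\<close>

lemma card_separating_bijections:
  fixes g :: "'b \<Rightarrow> 'c" and \<gamma> :: real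
  assumes fin: "finite V" "finite Y" "card V = card Y" and az: "a \<in> V" "z \<in> V" "a \<noteq> z"
    and "\<gamma> \<ge> 0" and spread: "\<And>y. y \<in> Y \<Longrightarrow> \<gamma> * card Y \<le> card {y' \<in> Y. g y' \<noteq> g y}"
  shows "\<gamma> * card (bijections V Y) \<le> card {\<sigma> \<in> bijections V Y. g (\<sigma> a) \<noteq> g (\<sigma> z)}"
proof -
  define B where "B = bijections V Y"
  define sep where "sep w = card {\<sigma> \<in> B. g (\<sigma> a) \<noteq> g (\<sigma> w)}" for w
  have "sep w = sep z" if "w \<in> V - {a}" for w
    unfolding sep_def B_def using that
    by (intro card_separating_bijections_transpose[OF az(1,2) _ az(3)]) auto
  then have "real (card (V - {a})) * sep z = (\<Sum>w\<in>V - {a}. real (sep w))"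
    by simp
  also have "\<dots> = (\<Sum>\<sigma>\<in>B. real (card {w \<in> V - {a}. g (\<sigma> a) \<noteq> g (\<sigma> w)}))"
    unfolding sep_def using fin finite_bijections[OF fin(1,2)]
    by (simp only: B_def of_nat_card_filter finite_Diff sum.swap[of _ "bijections V Y"])
  also have "\<dots> \<ge> (\<Sum>\<sigma>\<in>B. \<gamma> * card Y)"
  proof (rule sum_mono)
    fix \<sigma> assume "\<sigma> \<in> B"
    then have "bij_betw \<sigma> V Y"
      by (simp add: B_def bijections_def)
    then show "\<gamma> * card Y \<le> real (card {w \<in> V - {a}. g (\<sigma> a) \<noteq> g (\<sigma> w)})"
      using spread[of "\<sigma> a"] card_separated_partners[of \<sigma> V Y a g] az(1) by (simp add: bij_betw_apply)
  qed
  finally have "card B * (\<gamma> * card Y) \<le> real (card Y - 1) * sep z"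
    using fin az(1) by simp
  moreover have "card Y \<ge> 2"
    using az fin card_mono[of V "{a, z}"] by auto
  moreover have "0 \<le> \<gamma> * card B"
    using \<open>\<gamma> \<ge> 0\<close> by simp
  ultimately have "(card Y - 1) * (\<gamma> * card B) \<le> (card Y - 1) * sep z"
    by (simp add: algebra_simps)
  then show ?thesis
    using \<open>card Y \<ge> 2\<close> by (simp add: sep_def B_def)
qed

lemma exists_pairing:
  assumes "finite A" "finite C" "A \<inter> C = {}"
  obtains ps where "length ps = min (card A) (card C)" "distinct (map fst ps @ map snd ps)"
    "set (map fst ps) \<subseteq> A" "set (map snd ps) \<subseteq> C"
proof -
  obtain as cs where as: "set as = A" "distinct as" and cs: "set cs = C" "distinct cs"
    using finite_distinct_list assms(1,2) by metis
  define k where "k = min (card A) (card C)"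
  have "length (take k as) = k" "length (take k cs) = k"
    using as cs by (auto simp: k_def distinct_card)
  moreover have "set (take k as) \<subseteq> A" "set (take k cs) \<subseteq> C"
    using as cs set_take_subset by metis+
  moreover have "distinct (take k as @ take k cs)"
    using calculation(3,4) as cs assms(3) by auto
  ultimately show ?thesis
    by (intro that[of "zip (take k as) (take k cs)"]) (simp_all add: k_def)
qed

lemma sum_length_filter:
  fixes ps :: "'b list"
  assumes "finite B"
  shows "(\<Sum>x\<in>B. real (length (filter (P x) ps))) = (\<Sum>p\<leftarrow>ps. real (card {x \<in> B. P x p}))"
proof -
  have "real (length (filter Q (p # qs))) = (if Q p then 1 else 0) + real (length (filter Q qs))"
    for Q and p :: 'b and qs
    by simp
  then show ?thesis
    using assms by (induction ps) (simp_all add: sum.distrib of_nat_card_filter del: filter.simps)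
qed

definition n_separated :: "('b \<Rightarrow> 'c) \<Rightarrow> ('a \<Rightarrow> 'b) \<Rightarrow> ('a \<times> 'a) list \<Rightarrow> nat" where
  "n_separated g \<sigma> ps = length (filter (\<lambda>(a, z). g (\<sigma> a) \<noteq> g (\<sigma> z)) ps)"

lemma n_separated_le_sum_swap_change_sq:
  assumes "\<forall>(a, z)\<in>set ps. 1 \<le> \<bar>\<chi> a - \<chi> z\<bar>"
    and "\<forall>(a, z)\<in>set ps. g (\<sigma> a) \<noteq> g (\<sigma> z) \<longrightarrow> 1 \<le> \<bar>g (\<sigma> a) - g (\<sigma> z)\<bar>"
  shows "n_separated g \<sigma> ps / 4 \<le> (\<Sum>p\<leftarrow>ps. (swap_change \<chi> g \<sigma> p / 2)\<^sup>2)"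
proof -
  have "(\<Sum>p\<leftarrow>ps. if (\<lambda>(a, z). g (\<sigma> a) \<noteq> g (\<sigma> z)) p then 1 / 4 else 0)
      \<le> (\<Sum>p\<leftarrow>ps. (swap_change \<chi> g \<sigma> p / 2)\<^sup>2)"
  proof (rule sum_list_mono)
    fix p assume "p \<in> set ps"
    then obtain a z where p: "p = (a, z)" "1 \<le> \<bar>\<chi> a - \<chi> z\<bar>"
      "g (\<sigma> a) \<noteq> g (\<sigma> z) \<longrightarrow> 1 \<le> \<bar>g (\<sigma> a) - g (\<sigma> z)\<bar>"
      using assms by fastforce
    have "1 \<le> \<bar>swap_change \<chi> g \<sigma> p\<bar>" if "g (\<sigma> a) \<noteq> g (\<sigma> z)"
      using p that mult_mono[of 1 "\<bar>\<chi> a - \<chi> z\<bar>" 1 "\<bar>g (\<sigma> a) - g (\<sigma> z)\<bar>"]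
      by (simp add: swap_change_def abs_mult abs_minus_commute)
    then have "1 \<le> (swap_change \<chi> g \<sigma> p)\<^sup>2" if "g (\<sigma> a) \<noteq> g (\<sigma> z)"
      using that by (metis abs_ge_self abs_le_square_iff abs_one one_power2 order_trans)
    then show "(if (\<lambda>(a, z). g (\<sigma> a) \<noteq> g (\<sigma> z)) p then 1 / 4 else 0) \<le> (swap_change \<chi> g \<sigma> p / 2)\<^sup>2"
      by (auto simp: p power_divide)
  qed
  moreover have "(\<Sum>p\<leftarrow>ps. if (\<lambda>(a, z). g (\<sigma> a) \<noteq> g (\<sigma> z)) p then 1 / 4 else 0) = n_separated g \<sigma> ps / 4"
    unfolding n_separated_def by (induction ps) auto
  ultimately show ?thesis
    by simp
qed

lemma swap_avg_abs_lin_stat_ge: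
  assumes "finite V" "distinct (map fst ps @ map snd ps)"
    and pairs: "\<forall>(a, z)\<in>set ps. a \<in> V \<and> z \<in> V \<and> 1 \<le> \<bar>\<chi> a - \<chi> z\<bar>"
    and g_gap: "\<forall>(a, z)\<in>set ps. g (\<sigma> a) \<noteq> g (\<sigma> z) \<longrightarrow> 1 \<le> \<bar>g (\<sigma> a) - g (\<sigma> z)\<bar>"
  shows "13 / 64 * sqrt (n_separated g \<sigma> ps) \<le> swap_avg ps (\<lambda>\<sigma>. \<bar>lin_stat V \<chi> g \<sigma> - K\<bar>) \<sigma>"
proof -
  define ws where "ws = map (\<lambda>p. swap_change \<chi> g \<sigma> p / 2) ps"
  have "\<forall>(a, z)\<in>set ps. 1 \<le> \<bar>\<chi> a - \<chi> z\<bar>"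
    using pairs by auto
  then have "n_separated g \<sigma> ps / 4 \<le> (\<Sum>w\<leftarrow>ws. w\<^sup>2)"
    using n_separated_le_sum_swap_change_sq[of ps \<chi> g \<sigma>] g_gap by (simp add: ws_def comp_def)
  then have "sqrt (n_separated g \<sigma> ps) / 2 \<le> sqrt (\<Sum>w\<leftarrow>ws. w\<^sup>2)"
    using real_sqrt_le_mono[of "n_separated g \<sigma> ps / 4"] by (simp add: real_sqrt_divide)
  then have "13 / 64 * sqrt (n_separated g \<sigma> ps) \<le> 13 / 32 * sqrt (\<Sum>w\<leftarrow>ws. w\<^sup>2)"
    by simp
  also have "\<dots> \<le> sign_avg ws abs (lin_stat V \<chi> g \<sigma> + sum_list ws + - K)"
    by (rule sign_avg_abs_ge)
  also have "\<dots> = sign_avg ws (\<lambda>s. \<bar>s - K\<bar>) (lin_stat V \<chi> g \<sigma> + sum_list ws)"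
    using sign_avg_shift[of ws abs "- K"] by simp
  also have "\<dots> = swap_avg ps (\<lambda>\<sigma>. \<bar>lin_stat V \<chi> g \<sigma> - K\<bar>) \<sigma>"
  proof -
    have "\<forall>(a, z)\<in>set ps. a \<in> V \<and> z \<in> V"
      using pairs by auto
    then show ?thesis
      unfolding ws_def by (rule swap_avg_lin_stat[OF assms(1,2), symmetric])
  qed
  finally show ?thesis .
qed

lemma sum_abs_lin_stat_ge:
  assumes "finite V" "distinct (map fst ps @ map snd ps)"
    and pairs: "\<forall>(a, z)\<in>set ps. a \<in> V \<and> z \<in> V \<and> 1 \<le> \<bar>\<chi> a - \<chi> z\<bar>"
    and g_gap: "\<And>y y'. y \<in> Y \<Longrightarrow> y' \<in> Y \<Longrightarrow> g y \<noteq> g y' \<Longrightarrow> 1 \<le> \<bar>g y - g y'\<bar>"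
  shows "13 / 64 * (\<Sum>\<sigma>\<in>bijections V Y. real (n_separated g \<sigma> ps)) / sqrt (length ps)
    \<le> (\<Sum>\<sigma>\<in>bijections V Y. \<bar>lin_stat V \<chi> g \<sigma> - K\<bar>)"
proof -
  have in_V: "a \<in> V" "z \<in> V" if "(a, z) \<in> set ps" for a z
    using pairs that by auto
  have N_le_sqrt: "n_separated g \<sigma> ps / sqrt (length ps) \<le> sqrt (n_separated g \<sigma> ps)" for \<sigma>
  proof -
    have "real (n_separated g \<sigma> ps) \<le> length ps"
      by (simp add: n_separated_def)
    then have "sqrt (n_separated g \<sigma> ps) * sqrt (n_separated g \<sigma> ps) \<le> sqrt (n_separated g \<sigma> ps) * sqrt (length ps)"
      by (intro mult_left_mono) auto
    then show ?thesis
      by (cases "ps = []") (simp_all add: divide_le_eq)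
  qed
  have "13 / 64 * (\<Sum>\<sigma>\<in>bijections V Y. real (n_separated g \<sigma> ps)) / sqrt (length ps)
      = (\<Sum>\<sigma>\<in>bijections V Y. 13 / 64 * (n_separated g \<sigma> ps / sqrt (length ps)))"
    by (simp add: sum_distrib_left sum_divide_distrib)
  also have "\<dots> \<le> (\<Sum>\<sigma>\<in>bijections V Y. 13 / 64 * sqrt (n_separated g \<sigma> ps))"
    by (intro sum_mono mult_left_mono N_le_sqrt) simp
  also have "\<dots> \<le> (\<Sum>\<sigma>\<in>bijections V Y. swap_avg ps (\<lambda>\<sigma>. \<bar>lin_stat V \<chi> g \<sigma> - K\<bar>) \<sigma>)"
  proof (rule sum_mono)
    fix \<sigma> assume "\<sigma> \<in> bijections V Y"
    then have "\<sigma> ` V \<subseteq> Y"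
      by (auto simp: bijections_def)
    then have "\<forall>(a, z)\<in>set ps. g (\<sigma> a) \<noteq> g (\<sigma> z) \<longrightarrow> 1 \<le> \<bar>g (\<sigma> a) - g (\<sigma> z)\<bar>"
      using in_V by (auto intro!: g_gap)
    then show "13 / 64 * sqrt (n_separated g \<sigma> ps) \<le> swap_avg ps (\<lambda>\<sigma>. \<bar>lin_stat V \<chi> g \<sigma> - K\<bar>) \<sigma>"
      by (rule swap_avg_abs_lin_stat_ge[OF assms(1,2) pairs])
  qed
  also have "\<dots> = (\<Sum>\<sigma>\<in>bijections V Y. \<bar>lin_stat V \<chi> g \<sigma> - K\<bar>)"
    by (rule sum_swap_avg, rule comp_transpose_in_bijections) (auto intro: in_V)
  finally show ?thesis .
qed

lemma sum_n_separated_ge: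
  fixes g :: "'b \<Rightarrow> 'c" and \<gamma> :: real
  assumes fin: "finite V" "finite Y" "card V = card Y"
    and "distinct (map fst ps @ map snd ps)" "\<forall>(a, z)\<in>set ps. a \<in> V \<and> z \<in> V"
    and "\<gamma> \<ge> 0" and spread: "\<And>y. y \<in> Y \<Longrightarrow> \<gamma> * card Y \<le> card {y' \<in> Y. g y' \<noteq> g y}"
  shows "length ps * (\<gamma> * card (bijections V Y)) \<le> (\<Sum>\<sigma>\<in>bijections V Y. real (n_separated g \<sigma> ps))"
proof -
  have "(\<Sum>p\<leftarrow>ps. \<gamma> * card (bijections V Y))
      \<le> (\<Sum>p\<leftarrow>ps. real (card {\<sigma> \<in> bijections V Y. (\<lambda>(a, z). g (\<sigma> a) \<noteq> g (\<sigma> z)) p}))"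
  proof (rule sum_list_mono)
    fix p assume "p \<in> set ps"
    moreover obtain a z where p: "p = (a, z)"
      by fastforce
    ultimately have "a \<in> V" "z \<in> V" and "a \<in> fst ` set ps" "z \<in> snd ` set ps"
      using assms(5) by force+
    moreover from this(3,4) have "a \<noteq> z"
      using assms(4) by auto
    ultimately show "\<gamma> * card (bijections V Y)
        \<le> real (card {\<sigma> \<in> bijections V Y. (\<lambda>(a, z). g (\<sigma> a) \<noteq> g (\<sigma> z)) p})"
      using card_separating_bijections[OF fin _ _ _ \<open>\<gamma> \<ge> 0\<close> spread] by (simp add: p)
  qed
  also have "\<dots> = (\<Sum>\<sigma>\<in>bijections V Y. real (n_separated g \<sigma> ps))"
    unfolding n_separated_def using fin by (simp add: sum_length_filter finite_bijections)
  finally show ?thesis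
    by (simp add: sum_list_triv)
qed

lemma lin_stat_anticoncentration:
  fixes \<chi> :: "'a \<Rightarrow> real" and g :: "'b \<Rightarrow> real" and \<gamma> :: real
  assumes fin: "finite V" "finite Y" "card V = card Y" and "A \<subseteq> V"
    and \<chi>_gap: "\<And>a b. a \<in> A \<Longrightarrow> b \<in> V - A \<Longrightarrow> 1 \<le> \<bar>\<chi> a - \<chi> b\<bar>"
    and g_gap: "\<And>y y'. y \<in> Y \<Longrightarrow> y' \<in> Y \<Longrightarrow> g y \<noteq> g y' \<Longrightarrow> 1 \<le> \<bar>g y - g y'\<bar>"
    and "\<gamma> \<ge> 0" and spread: "\<And>y. y \<in> Y \<Longrightarrow> \<gamma> * card Y \<le> card {y' \<in> Y. g y' \<noteq> g y}"
  shows "card (bijections V Y) * (13 / 64 * \<gamma> * sqrt (min (card A) (card (V - A))))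
    \<le> (\<Sum>\<sigma>\<in>bijections V Y. \<bar>lin_stat V \<chi> g \<sigma> - K\<bar>)"
proof -
  define B where "B = bijections V Y"
  define k where "k = min (card A) (card (V - A))"
  obtain ps where ps: "length ps = k" "distinct (map fst ps @ map snd ps)"
    and sides: "set (map fst ps) \<subseteq> A" "set (map snd ps) \<subseteq> V - A"
  proof (rule exists_pairing[of A "V - A"])
    show "finite A" "finite (V - A)" "A \<inter> (V - A) = {}"
      using fin(1) \<open>A \<subseteq> V\<close> finite_subset by auto
  qed (use that in \<open>simp add: k_def\<close>)
  have pairs: "\<forall>(a, z)\<in>set ps. a \<in> V \<and> z \<in> V \<and> 1 \<le> \<bar>\<chi> a - \<chi> z\<bar>"
    using sides \<open>A \<subseteq> V\<close> \<chi>_gap by (force simp: image_subset_iff)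
  show ?thesis
  proof (cases "k = 0")
    case True
    then show ?thesis
      by (simp add: k_def sum_nonneg)
  next
    case False
    have "card B * (13 / 64 * \<gamma> * sqrt k) = 13 / 64 * (k * (\<gamma> * card B)) / sqrt k"
      using False real_div_sqrt[of k] by (simp add: field_simps)
    also have "\<dots> \<le> 13 / 64 * (\<Sum>\<sigma>\<in>B. real (n_separated g \<sigma> ps)) / sqrt k"
      using sum_n_separated_ge[OF fin ps(2) _ \<open>\<gamma> \<ge> 0\<close> spread] pairs
      by (intro divide_right_mono mult_left_mono) (auto simp: ps(1) B_def)
    also have "\<dots> \<le> (\<Sum>\<sigma>\<in>B. \<bar>lin_stat V \<chi> g \<sigma> - K\<bar>)"
      using sum_abs_lin_stat_ge[OF fin(1) ps(2) pairs g_gap] by (simp add: ps(1) B_def)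
    finally show ?thesis
      by (simp add: B_def k_def)
  qed
qed

section \<open>Common edges of a copy\<close>

definition edge_ind :: "nat set set \<Rightarrow> nat \<Rightarrow> nat \<Rightarrow> real" where
  "edge_ind E a b = (if {a, b} \<in> E then 1 else 0)"

lemma edge_ind_commute: "edge_ind E a b = edge_ind E b a"
  by (simp add: edge_ind_def insert_commute)

lemma simple_graph_edge:
  assumes "simple_graph n E" "e \<in> E"
  obtains a b where "e = {a, b}" "a \<noteq> b" "a < n" "b < n"
  using assms unfolding simple_graph_def by blast

lemma finite_simple_graph: "simple_graph n E \<Longrightarrow> finite E"
  unfolding simple_graph_def by (rule finite_subset[of _ "Pow {..<n}"]) auto

lemma sum_edge_ind:
  assumes "simple_graph n E"
  shows "(\<Sum>a<n. \<Sum>b<n. edge_ind E a b) = 2 * card E"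
proof -
  define ends where "ends e = {p. {fst p, snd p} = e}" for e :: "nat set"
  have ends_edge: "ends e = {(a, b), (b, a)}" if "e = {a, b}" for a b e
    using that by (auto simp: ends_def doubleton_eq_iff)
  have "(\<Sum>a<n. \<Sum>b<n. edge_ind E a b) = real (card {p \<in> {..<n} \<times> {..<n}. {fst p, snd p} \<in> E})"
    by (simp add: edge_ind_def sum.cartesian_product case_prod_beta of_nat_card_filter)
  also have "{p \<in> {..<n} \<times> {..<n}. {fst p, snd p} \<in> E} = (\<Union>e\<in>E. ends e)"
  proof (intro equalityI subsetI)
    fix p assume "p \<in> (\<Union>e\<in>E. ends e)"
    then have "{fst p, snd p} \<in> E"
      by (auto simp: ends_def)
    moreover obtain a b where "{fst p, snd p} = {a, b}" "a < n" "b < n"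
      using simple_graph_edge[OF assms calculation] by metis
    ultimately have "fst p < n" "snd p < n"
      by (auto simp: doubleton_eq_iff)
    with \<open>{fst p, snd p} \<in> E\<close> show "p \<in> {p \<in> {..<n} \<times> {..<n}. {fst p, snd p} \<in> E}"
      by (simp add: mem_Times_iff)
  qed (auto simp: ends_def)
  also have "card (\<Union>e\<in>E. ends e) = (\<Sum>e\<in>E. card (ends e))"
  proof (rule card_UN_disjoint)
    show "finite E"
      using finite_simple_graph[OF assms] .
    show "\<forall>e\<in>E. finite (ends e)"
      by (auto elim!: simple_graph_edge[OF assms] simp: ends_edge)
    show "\<forall>e\<in>E. \<forall>e'\<in>E. e \<noteq> e' \<longrightarrow> ends e \<inter> ends e' = {}"
      by (auto simp: ends_def)
  qed
  also have "(\<Sum>e\<in>E. card (ends e)) = (\<Sum>e\<in>E. 2)"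
    by (rule sum.cong) (auto elim!: simple_graph_edge[OF assms] simp: ends_edge)
  finally show ?thesis
    by simp
qed

lemma card_image_edges_inter:
  assumes F: "simple_graph n F" and \<pi>: "bij_betw \<pi> {..<n} {..<n}"
  shows "real (card ((\<lambda>e. \<pi> ` e) ` F \<inter> G))
    = (\<Sum>a<n. \<Sum>b<n. edge_ind F a b * edge_ind G (\<pi> a) (\<pi> b)) / 2"
proof -
  define E where "E = {e \<in> F. \<pi> ` e \<in> G}"
  have "simple_graph n E"
    using F unfolding simple_graph_def E_def by auto
  have "inj_on (\<lambda>e. \<pi> ` e) F"
  proof (rule inj_onI)
    fix e e' assume "e \<in> F" "e' \<in> F" "\<pi> ` e = \<pi> ` e'"
    moreover have "e \<subseteq> {..<n}" "e' \<subseteq> {..<n}"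
      using F calculation(1,2) unfolding simple_graph_def by auto
    ultimately show "e = e'"
      using \<pi> inj_on_image_eq_iff[of \<pi> "{..<n}" e e'] by (simp add: bij_betw_def)
  qed
  moreover have "(\<lambda>e. \<pi> ` e) ` F \<inter> G = (\<lambda>e. \<pi> ` e) ` E"
    unfolding E_def by auto
  ultimately have "card ((\<lambda>e. \<pi> ` e) ` F \<inter> G) = card E"
    by (simp add: card_image E_def inj_on_subset[of _ F])
  moreover have "(\<Sum>a<n. \<Sum>b<n. edge_ind F a b * edge_ind G (\<pi> a) (\<pi> b)) = (\<Sum>a<n. \<Sum>b<n. edge_ind E a b)"
    unfolding E_def edge_ind_def by (intro sum.cong refl) auto
  ultimately show ?thesis
    using sum_edge_ind[OF \<open>simple_graph n E\<close>] by simp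
qed

section \<open>Swapping pairs of vertices\<close>

locale pairing =
  fixes x x' :: "nat \<Rightarrow> 'a" and I :: "nat set"
  assumes inj_first: "inj_on x I" and inj_second: "inj_on x' I"
    and disjoint: "x ` I \<inter> x' ` I = {}"

lemma pairing_if_distinct:
  assumes "distinct (map x [0..<k] @ map x' [0..<k])" "m \<le> k"
  shows "pairing x x' {..<m}"
proof -
  have sub: "{..<m} \<subseteq> {..<k}"
    using assms(2) by auto
  have "inj_on x {..<k}" "inj_on x' {..<k}" "x ` {..<k} \<inter> x' ` {..<k} = {}"
    using assms(1) by (auto simp: distinct_map atLeast0LessThan)
  moreover have "x ` {..<m} \<inter> x' ` {..<m} \<subseteq> x ` {..<k} \<inter> x' ` {..<k}"
    using sub by (intro Int_mono image_mono)
  ultimately show ?thesis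
    unfolding pairing_def using inj_on_subset[OF _ sub] by blast
qed

definition pair_swap :: "(nat \<Rightarrow> 'a) \<Rightarrow> (nat \<Rightarrow> 'a) \<Rightarrow> nat set \<Rightarrow> 'a \<Rightarrow> 'a" where
  "pair_swap x x' S y =
    (if y \<in> x ` S then x' (inv_into S x y) else if y \<in> x' ` S then x (inv_into S x' y) else y)"

context pairing
begin

lemma card_pairs: "finite I \<Longrightarrow> card (x ` I \<union> x' ` I) = 2 * card I"
  using inj_first inj_second disjoint by (simp add: card_Un_disjoint card_image)

lemma pair_swap_first:
  assumes "S \<subseteq> I" "i \<in> I"
  shows "pair_swap x x' S (x i) = (if i \<in> S then x' i else x i)"
proof -
  have "inj_on x S"
    using inj_first assms(1) by (rule inj_on_subset)
  moreover have "x i \<notin> x' ` S"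
    using disjoint assms by blast
  moreover have "x i \<notin> x ` S" if "i \<notin> S"
    using that inj_first assms by (auto simp: inj_on_image_mem_iff)
  ultimately show ?thesis
    by (auto simp: pair_swap_def)
qed

lemma pair_swap_second:
  assumes "S \<subseteq> I" "i \<in> I"
  shows "pair_swap x x' S (x' i) = (if i \<in> S then x i else x' i)"
proof -
  have "inj_on x' S"
    using inj_second assms(1) by (rule inj_on_subset)
  moreover have "x' i \<notin> x ` S"
    using disjoint assms by blast
  moreover have "x' i \<notin> x' ` S" if "i \<notin> S"
    using that inj_second assms by (auto simp: inj_on_image_mem_iff)
  ultimately show ?thesis
    by (auto simp: pair_swap_def)
qed

lemma pair_swap_outside: "S \<subseteq> I \<Longrightarrow> y \<notin> x ` I \<union> x' ` I \<Longrightarrow> pair_swap x x' S y = y"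
  by (auto simp: pair_swap_def)

lemma pair_swap_cases:
  obtains i where "i \<in> I" "y = x i" | i where "i \<in> I" "y = x' i" | "y \<notin> x ` I \<union> x' ` I"
  by blast

lemma pair_swap_involutory: "S \<subseteq> I \<Longrightarrow> pair_swap x x' S (pair_swap x x' S y) = y"
  by (cases y rule: pair_swap_cases) (simp_all add: pair_swap_first pair_swap_second pair_swap_outside)

lemma pair_swap_mem:
  assumes "S \<subseteq> I" "x ` I \<union> x' ` I \<subseteq> X" "y \<in> X"
  shows "pair_swap x x' S y \<in> X"
  using assms
  by (cases y rule: pair_swap_cases) (auto simp: pair_swap_first pair_swap_second pair_swap_outside)

lemma bij_betw_pair_swap:
  "S \<subseteq> I \<Longrightarrow> x ` I \<union> x' ` I \<subseteq> X \<Longrightarrow> bij_betw (pair_swap x x' S) X X"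
  by (rule bij_betw_byWitness[where f' = "pair_swap x x' S"])
    (auto simp: pair_swap_involutory pair_swap_mem)

end

lemma bij_betw_extend_pairings:
  assumes "pairing u u' I" "pairing x x' I" "finite I" "finite U" "finite X" "card U = card X"
    and "u ` I \<union> u' ` I \<subseteq> U" "x ` I \<union> x' ` I \<subseteq> X"
  obtains \<rho> where "bij_betw \<rho> U X" "\<And>i. i \<in> I \<Longrightarrow> \<rho> (u i) = x i" "\<And>i. i \<in> I \<Longrightarrow> \<rho> (u' i) = x' i"
proof -
  interpret u: pairing u u' I by fact
  interpret x: pairing x x' I by fact
  define SU where "SU = u ` I \<union> u' ` I"
  define SX where "SX = x ` I \<union> x' ` I"
  have "card (U - SU) = card (X - SX)"
    using assms u.card_pairs x.card_pairs
    by (simp add: card_Diff_subset SU_def SX_def finite_subset)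
  then obtain \<rho>0 where \<rho>0: "bij_betw \<rho>0 (U - SU) (X - SX)"
    using finite_same_card_bij assms(4,5) by blast
  define \<rho> where "\<rho> a = (if a \<in> u ` I then x (the_inv_into I u a)
      else if a \<in> u' ` I then x' (the_inv_into I u' a) else \<rho>0 a)" for a
  have "bij_betw (x \<circ> the_inv_into I u) (u ` I) (x ` I)"
    using bij_betw_the_inv_into[OF inj_on_imp_bij_betw[OF u.inj_first]]
      inj_on_imp_bij_betw[OF x.inj_first] by (rule bij_betw_trans)
  then have "bij_betw \<rho> (u ` I) (x ` I)"
    by (rule bij_betw_cong[THEN iffD1, rotated]) (simp add: \<rho>_def)
  moreover have "bij_betw (x' \<circ> the_inv_into I u') (u' ` I) (x' ` I)"
    using bij_betw_the_inv_into[OF inj_on_imp_bij_betw[OF u.inj_second]]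
      inj_on_imp_bij_betw[OF x.inj_second] by (rule bij_betw_trans)
  then have "bij_betw \<rho> (u' ` I) (x' ` I)"
    by (rule bij_betw_cong[THEN iffD1, rotated]) (use u.disjoint in \<open>auto simp: \<rho>_def\<close>)
  ultimately have "bij_betw \<rho> SU SX"
    unfolding SU_def SX_def using x.disjoint by (rule bij_betw_combine)
  moreover have "bij_betw \<rho> (U - SU) (X - SX)"
    using \<rho>0 by (rule bij_betw_cong[THEN iffD1, rotated]) (auto simp: \<rho>_def SU_def)
  ultimately have "bij_betw \<rho> (SU \<union> (U - SU)) (SX \<union> (X - SX))"
    by (rule bij_betw_combine) blast
  moreover have "SU \<union> (U - SU) = U" "SX \<union> (X - SX) = X"
    using assms(7,8) by (auto simp: SU_def SX_def)
  moreover have "\<rho> (u i) = x i" "\<rho> (u' i) = x' i" if "i \<in> I" for i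
    using that u.inj_first u.inj_second u.disjoint by (auto simp: \<rho>_def the_inv_into_f_f)
  ultimately show ?thesis
    using that by simp
qed

lemma exists_ge_average:
  fixes f :: "'a \<Rightarrow> real" and c :: real
  assumes "finite B" "B \<noteq> {}" "card B * c \<le> (\<Sum>x\<in>B. f x)"
  obtains x where "x \<in> B" "c \<le> f x"
proof -
  have "(\<Sum>x\<in>B. f x) \<le> card B * Max (f ` B)"
    using assms(1) by (intro sum_bounded_above Max_ge) auto
  moreover have "0 < real (card B)"
    using assms(1,2) by (simp add: card_gt_0_iff)
  ultimately have "c \<le> Max (f ` B)"
    using assms(3) mult_le_cancel_left_pos[of "real (card B)" c "Max (f ` B)"] by linarith
  moreover have "Max (f ` B) \<in> f ` B"
    using assms(1,2) by simp
  ultimately show ?thesis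
    using that by auto
qed

lemma one_of_four_deviates:
  fixes a b c d e \<delta> :: real
  assumes "4 * \<delta> \<le> a - b - c + d"
  shows "\<delta> \<le> \<bar>a - e\<bar> \<or> \<delta> \<le> \<bar>b - e\<bar> \<or> \<delta> \<le> \<bar>c - e\<bar> \<or> \<delta> \<le> \<bar>d - e\<bar>"
  using assms abs_ge_self[of "a - e"] abs_ge_minus_self[of "b - e"] abs_ge_minus_self[of "c - e"]
    abs_ge_self[of "d - e"]
  by linarith

locale swap_embedding =
  guest: pairing u u' "{..<m}" + host: pairing x x' "{..<m}"
  for u u' x x' :: "nat \<Rightarrow> nat" and m :: nat +
  fixes n :: nat and U V X Y :: "nat set" and \<rho> :: "nat \<Rightarrow> nat" and F G :: "nat set set"
  assumes UV: "U \<union> V = {..<n}" "U \<inter> V = {}" and XY: "X \<union> Y = {..<n}" "X \<inter> Y = {}"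
    and guest_pairs_in: "u ` {..<m} \<union> u' ` {..<m} \<subseteq> U"
    and host_pairs_in: "x ` {..<m} \<union> x' ` {..<m} \<subseteq> X"
    and \<rho>: "bij_betw \<rho> U X" "\<And>i. i < m \<Longrightarrow> \<rho> (u i) = x i" "\<And>i. i < m \<Longrightarrow> \<rho> (u' i) = x' i"
    and F: "simple_graph n F"
begin

definition embed :: "(nat \<Rightarrow> nat) \<Rightarrow> nat set \<Rightarrow> nat \<Rightarrow> nat" where
  "embed \<sigma> S a = (if a \<in> V then \<sigma> a else pair_swap x x' S (\<rho> a))"

lemma bij_betw_embed:
  assumes "S \<subseteq> {..<m}" "bij_betw \<sigma> V Y"
  shows "bij_betw (embed \<sigma> S) {..<n} {..<n}"
proof -
  have "bij_betw (pair_swap x x' S \<circ> \<rho>) U X"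
    using \<rho>(1) host.bij_betw_pair_swap[OF assms(1) host_pairs_in] by (rule bij_betw_trans)
  then have "bij_betw (embed \<sigma> S) U X"
    by (rule bij_betw_cong[THEN iffD1, rotated]) (use UV in \<open>auto simp: embed_def\<close>)
  moreover have "bij_betw (embed \<sigma> S) V Y"
    using assms(2) by (rule bij_betw_cong[THEN iffD1, rotated]) (simp add: embed_def)
  ultimately have "bij_betw (embed \<sigma> S) (U \<union> V) (X \<union> Y)"
    using XY(2) by (rule bij_betw_combine)
  then show ?thesis
    using UV XY by simp
qed

lemma is_copy_embed: "S \<subseteq> {..<m} \<Longrightarrow> bij_betw \<sigma> V Y \<Longrightarrow> is_copy n F ((\<lambda>e. embed \<sigma> S ` e) ` F)"
  unfolding is_copy_def using bij_betw_embed by blast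

definition overlap :: "(nat \<Rightarrow> nat) \<Rightarrow> nat set \<Rightarrow> real" where
  "overlap \<sigma> S = (\<Sum>a<n. \<Sum>b<n. edge_ind F a b * edge_ind G (embed \<sigma> S a) (embed \<sigma> S b))"

lemma card_embed_edges_inter:
  "S \<subseteq> {..<m} \<Longrightarrow> bij_betw \<sigma> V Y \<Longrightarrow> real (card ((\<lambda>e. embed \<sigma> S ` e) ` F \<inter> G)) = overlap \<sigma> S / 2"
  unfolding overlap_def by (rule card_image_edges_inter[OF F bij_betw_embed])

definition cross :: "(nat \<Rightarrow> nat) \<Rightarrow> nat set \<Rightarrow> real" where
  "cross \<sigma> S = (\<Sum>a\<in>U. \<Sum>b\<in>V. edge_ind F a b * edge_ind G (pair_swap x x' S (\<rho> a)) (\<sigma> b))"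

lemma finite_U: "finite U" and finite_V: "finite V"
  using UV(1) finite_subset[of _ "{..<n}"] by auto

lemma sum_split: "(\<Sum>a<n. f a) = (\<Sum>a\<in>U. f a) + (\<Sum>a\<in>V. f a :: real)"
  using sum.union_disjoint[OF finite_U finite_V UV(2)] UV(1) by simp

lemma overlap_split:
  "overlap \<sigma> S =
    (\<Sum>a\<in>U. \<Sum>b\<in>U. edge_ind F a b * edge_ind G (pair_swap x x' S (\<rho> a)) (pair_swap x x' S (\<rho> b)))
    + 2 * cross \<sigma> S + (\<Sum>a\<in>V. \<Sum>b\<in>V. edge_ind F a b * edge_ind G (\<sigma> a) (\<sigma> b))"
proof -
  define T where "T a b = edge_ind F a b * edge_ind G (embed \<sigma> S a) (embed \<sigma> S b)" for a b
  have "overlap \<sigma> S = (\<Sum>a\<in>U. \<Sum>b\<in>U. T a b) + (\<Sum>a\<in>U. \<Sum>b\<in>V. T a b)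
      + ((\<Sum>a\<in>V. \<Sum>b\<in>U. T a b) + (\<Sum>a\<in>V. \<Sum>b\<in>V. T a b))"
    by (simp add: overlap_def T_def sum_split sum.distrib)
  moreover have "(\<Sum>a\<in>V. \<Sum>b\<in>U. T a b) = (\<Sum>a\<in>U. \<Sum>b\<in>V. T a b)"
    by (subst sum.swap) (simp add: T_def edge_ind_commute mult.commute)
  moreover have "(\<Sum>a\<in>U. \<Sum>b\<in>V. T a b) = cross \<sigma> S"
    using UV(2) unfolding cross_def T_def embed_def by (intro sum.cong refl) auto
  moreover have "(\<Sum>a\<in>U. \<Sum>b\<in>U. T a b)
      = (\<Sum>a\<in>U. \<Sum>b\<in>U. edge_ind F a b * edge_ind G (pair_swap x x' S (\<rho> a)) (pair_swap x x' S (\<rho> b)))"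
    using UV(2) unfolding T_def embed_def by (intro sum.cong refl) auto
  moreover have "(\<Sum>a\<in>V. \<Sum>b\<in>V. T a b) = (\<Sum>a\<in>V. \<Sum>b\<in>V. edge_ind F a b * edge_ind G (\<sigma> a) (\<sigma> b))"
    unfolding T_def embed_def by simp
  ultimately show ?thesis
    by simp
qed

definition pair_stat :: "nat \<Rightarrow> (nat \<Rightarrow> nat) \<Rightarrow> real" where
  "pair_stat i = lin_stat V (\<lambda>b. edge_ind F (u i) b - edge_ind F (u' i) b)
    (\<lambda>y. edge_ind G (x' i) y - edge_ind G (x i) y)"

lemma \<rho>_outside_pairs:
  assumes "a \<in> U" "a \<notin> u ` {..<m} \<union> u' ` {..<m}"
  shows "\<rho> a \<notin> x ` {..<m} \<union> x' ` {..<m}"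
proof
  assume "\<rho> a \<in> x ` {..<m} \<union> x' ` {..<m}"
  then obtain i where "i < m" "\<rho> a = \<rho> (u i) \<or> \<rho> a = \<rho> (u' i)"
    using \<rho>(2,3) by auto
  moreover have "u i \<in> U" "u' i \<in> U"
    using guest_pairs_in \<open>i < m\<close> by auto
  ultimately have "a = u i \<or> a = u' i"
    using inj_onD[OF bij_betw_imp_inj_on[OF \<rho>(1)]] assms(1) by blast
  then show False
    using assms(2) \<open>i < m\<close> by auto
qed

lemma cross_diff:
  assumes S: "S \<subseteq> {..<m}"
  shows "cross \<sigma> S - cross \<sigma> ({..<m} - S) = (\<Sum>i<m. (if i \<in> S then 1 else - 1) * pair_stat i \<sigma>)"
proof -
  define Sc where "Sc = {..<m} - S"
  have Sc: "Sc \<subseteq> {..<m}"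
    by (auto simp: Sc_def)
  define f where "f a = (\<Sum>b\<in>V. edge_ind F a b *
      (edge_ind G (pair_swap x x' S (\<rho> a)) (\<sigma> b) - edge_ind G (pair_swap x x' Sc (\<rho> a)) (\<sigma> b)))" for a
  have "cross \<sigma> S - cross \<sigma> Sc = (\<Sum>a\<in>U. f a)"
    by (simp add: cross_def f_def algebra_simps sum_subtractf)
  also have "\<dots> = (\<Sum>a\<in>u ` {..<m} \<union> u' ` {..<m}. f a)"
  proof (rule sum.mono_neutral_right[OF finite_U guest_pairs_in])
    show "\<forall>a\<in>U - (u ` {..<m} \<union> u' ` {..<m}). f a = 0"
      using \<rho>_outside_pairs host.pair_swap_outside[OF S] host.pair_swap_outside[OF Sc]
      by (simp add: f_def)
  qed
  also have "\<dots> = (\<Sum>i<m. f (u i)) + (\<Sum>i<m. f (u' i))"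
    using guest.disjoint guest.inj_first guest.inj_second
    by (simp add: sum.union_disjoint sum.reindex)
  also have "\<dots> = (\<Sum>i<m. (if i \<in> S then 1 else - 1) * pair_stat i \<sigma>)"
    unfolding sum.distrib[symmetric]
  proof (rule sum.cong[OF refl])
    fix i assume "i \<in> {..<m}"
    then have "pair_swap x x' S (\<rho> (u i)) = (if i \<in> S then x' i else x i)"
      "pair_swap x x' S (\<rho> (u' i)) = (if i \<in> S then x i else x' i)"
      "pair_swap x x' Sc (\<rho> (u i)) = (if i \<in> S then x i else x' i)"
      "pair_swap x x' Sc (\<rho> (u' i)) = (if i \<in> S then x' i else x i)"
      using host.pair_swap_first[OF S] host.pair_swap_second[OF S]
        host.pair_swap_first[OF Sc] host.pair_swap_second[OF Sc] \<rho>(2,3)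
      by (simp_all add: Sc_def)
    then have "f (u i) + f (u' i) = (\<Sum>b\<in>V. (if i \<in> S then 1 else - 1) *
        ((edge_ind F (u i) b - edge_ind F (u' i) b) * (edge_ind G (x' i) (\<sigma> b) - edge_ind G (x i) (\<sigma> b))))"
      unfolding f_def sum.distrib[symmetric] by (intro sum.cong refl) (simp add: algebra_simps)
    then show "f (u i) + f (u' i) = (if i \<in> S then 1 else - 1) * pair_stat i \<sigma>"
      by (simp add: pair_stat_def lin_stat_def sum_distrib_left)
  qed
  finally show ?thesis
    by (simp add: Sc_def)
qed

lemma overlap_alternating:
  assumes "S \<subseteq> {..<m}"
  shows "overlap \<sigma>1 S - overlap \<sigma>2 S - overlap \<sigma>1 ({..<m} - S) + overlap \<sigma>2 ({..<m} - S)
    = 2 * (\<Sum>i<m. (if i \<in> S then 1 else - 1) * (pair_stat i \<sigma>1 - pair_stat i \<sigma>2))"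
proof -
  have "overlap \<sigma>1 S - overlap \<sigma>2 S - overlap \<sigma>1 ({..<m} - S) + overlap \<sigma>2 ({..<m} - S)
      = 2 * ((cross \<sigma>1 S - cross \<sigma>1 ({..<m} - S)) - (cross \<sigma>2 S - cross \<sigma>2 ({..<m} - S)))"
    unfolding overlap_split by simp
  then show ?thesis
    unfolding cross_diff[OF assms] by (simp add: right_diff_distrib sum_subtractf)
qed

lemma exists_copy_deviating_by_stat_gap:
  assumes "bij_betw \<sigma>1 V Y" "bij_betw \<sigma>2 V Y"
  shows "\<exists>F0. is_copy n F F0 \<and> (\<Sum>i<m. \<bar>pair_stat i \<sigma>1 - pair_stat i \<sigma>2\<bar>) / 4
    \<le> \<bar>real (card (F0 \<inter> G)) - real (card F) / 2\<bar>"
proof -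
  define \<delta> where "\<delta> = (\<Sum>i<m. \<bar>pair_stat i \<sigma>1 - pair_stat i \<sigma>2\<bar>) / 4"
  define S where "S = {i \<in> {..<m}. pair_stat i \<sigma>2 \<le> pair_stat i \<sigma>1}"
  define count where "count \<sigma> S' = real (card ((\<lambda>e. embed \<sigma> S' ` e) ` F \<inter> G))" for \<sigma> S'
  have S: "S \<subseteq> {..<m}" "{..<m} - S \<subseteq> {..<m}"
    by (auto simp: S_def)
  then have "count \<sigma>1 S - count \<sigma>2 S - count \<sigma>1 ({..<m} - S) + count \<sigma>2 ({..<m} - S)
      = (\<Sum>i<m. (if i \<in> S then 1 else - 1) * (pair_stat i \<sigma>1 - pair_stat i \<sigma>2))"
    using overlap_alternating[of S \<sigma>1 \<sigma>2] by (simp add: count_def card_embed_edges_inter assms)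
  also have "\<dots> = (\<Sum>i<m. \<bar>pair_stat i \<sigma>1 - pair_stat i \<sigma>2\<bar>)"
    by (rule sum.cong) (auto simp: S_def)
  also have "\<dots> = 4 * \<delta>"
    by (simp add: \<delta>_def)
  finally have "\<delta> \<le> \<bar>count \<sigma>1 S - card F / 2\<bar> \<or> \<delta> \<le> \<bar>count \<sigma>2 S - card F / 2\<bar>
      \<or> \<delta> \<le> \<bar>count \<sigma>1 ({..<m} - S) - card F / 2\<bar> \<or> \<delta> \<le> \<bar>count \<sigma>2 ({..<m} - S) - card F / 2\<bar>"
    by (intro one_of_four_deviates) simp
  moreover have copy: "?thesis" if "bij_betw \<sigma> V Y" "S' \<subseteq> {..<m}" "\<delta> \<le> \<bar>count \<sigma> S' - card F / 2\<bar>"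
    for \<sigma> S'
    using is_copy_embed[OF that(2,1)] that(3) unfolding count_def \<delta>_def by blast
  ultimately show ?thesis
    using copy[OF assms(1) S(1)] copy[OF assms(2) S(1)] copy[OF assms(1) S(2)] copy[OF assms(2) S(2)]
    by blast
qed

lemma exists_deviating_copy:
  fixes c :: "nat \<Rightarrow> real"
  assumes "card V = card Y"
    and anti: "\<And>i K. i < m \<Longrightarrow> card (bijections V Y) * c i \<le> (\<Sum>\<sigma>\<in>bijections V Y. \<bar>pair_stat i \<sigma> - K\<bar>)"
  shows "\<exists>F0. is_copy n F F0 \<and> (\<Sum>i<m. c i) / 4 \<le> \<bar>real (card (F0 \<inter> G)) - real (card F) / 2\<bar>"
proof -
  define B where "B = bijections V Y"
  have "finite Y"
    using XY(1) finite_subset[of Y "{..<n}"] by auto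
  then have "finite B" "B \<noteq> {}"
    using finite_V assms(1) by (simp_all add: B_def finite_bijections bijections_nonempty)
  then obtain \<sigma>2 where "\<sigma>2 \<in> B"
    by blast
  have "card B * (\<Sum>i<m. c i) \<le> (\<Sum>i<m. \<Sum>\<sigma>\<in>B. \<bar>pair_stat i \<sigma> - pair_stat i \<sigma>2\<bar>)"
    unfolding sum_distrib_left B_def by (intro sum_mono anti) simp
  also have "\<dots> = (\<Sum>\<sigma>\<in>B. \<Sum>i<m. \<bar>pair_stat i \<sigma> - pair_stat i \<sigma>2\<bar>)"
    by (rule sum.swap)
  finally obtain \<sigma>1 where "\<sigma>1 \<in> B" and "(\<Sum>i<m. c i) \<le> (\<Sum>i<m. \<bar>pair_stat i \<sigma>1 - pair_stat i \<sigma>2\<bar>)"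
    using exists_ge_average[OF \<open>finite B\<close> \<open>B \<noteq> {}\<close>] by blast
  moreover have "bij_betw \<sigma>1 V Y" "bij_betw \<sigma>2 V Y"
    using \<open>\<sigma>1 \<in> B\<close> \<open>\<sigma>2 \<in> B\<close> by (simp_all add: B_def bijections_def)
  ultimately obtain F0 where "is_copy n F F0" "(\<Sum>i<m. c i) \<le> (\<Sum>i<m. \<bar>pair_stat i \<sigma>1 - pair_stat i \<sigma>2\<bar>)"
    "(\<Sum>i<m. \<bar>pair_stat i \<sigma>1 - pair_stat i \<sigma>2\<bar>) / 4 \<le> \<bar>real (card (F0 \<inter> G)) - real (card F) / 2\<bar>"
    using exists_copy_deviating_by_stat_gap by blast
  then show ?thesis
    by (intro exI[of _ F0]) auto
qed
end

section \<open>Goodness of guest and host\<close>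

lemma card_Diff_ge:
  assumes "finite P" "finite Q"
  shows "(card (P \<union> Q - P \<inter> Q) - \<bar>real (card P) - real (card Q)\<bar>) / 2 \<le> card (P - Q)"
proof -
  have "P \<union> Q - P \<inter> Q = (P - Q) \<union> (Q - P)"
    by blast
  then have "card (P \<union> Q - P \<inter> Q) = card (P - Q) + card (Q - P)"
    using assms by (simp add: card_Un_disjoint Int_Diff_disjoint Diff_Int_distrib2 Int_commute)
  moreover have "card P = card (P \<inter> Q) + card (P - Q)" "card Q = card (P \<inter> Q) + card (Q - P)"
    using assms card_Int_Diff[of P Q] card_Int_Diff[of Q P] by (simp_all add: Int_commute)
  ultimately show ?thesis
    by (simp add: abs_if)
qed

lemma host_pair_spread:
  fixes G :: "nat set set" and p p' :: nat
  assumes "finite Y"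
    and host: "\<bar>real (deg G Y p) - real (deg G Y p')\<bar> \<le> 0.00002 * card Y"
      "0.02 * card Y \<le> card (nbrs G Y p \<union> nbrs G Y p' - nbrs G Y p \<inter> nbrs G Y p')"
  defines "g \<equiv> \<lambda>y. edge_ind G p' y - edge_ind G p y"
  shows "0.009 * card Y \<le> card {y' \<in> Y. g y' \<noteq> g y}"
proof -
  define P where "P = nbrs G Y p' - nbrs G Y p"
  define Q where "Q = nbrs G Y p - nbrs G Y p'"
  have "finite (nbrs G Y q)" for q
    using assms(1) by (simp add: nbrs_def)
  moreover have "nbrs G Y p' \<union> nbrs G Y p - nbrs G Y p' \<inter> nbrs G Y p
      = nbrs G Y p \<union> nbrs G Y p' - nbrs G Y p \<inter> nbrs G Y p'"
    by blast
  ultimately have P_big: "0.009 * card Y \<le> card P" and Q_big: "0.009 * card Y \<le> card Q"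
    using card_Diff_ge[of "nbrs G Y p'" "nbrs G Y p"] card_Diff_ge[of "nbrs G Y p" "nbrs G Y p'"] host
    unfolding P_def Q_def deg_def by (simp_all add: abs_minus_commute)
  show ?thesis
  proof (cases "g y = 1")
    case True
    then have "Q \<subseteq> {y' \<in> Y. g y' \<noteq> g y}"
      by (auto simp: Q_def g_def nbrs_def edge_ind_def insert_commute)
    then show ?thesis
      using Q_big card_mono[of "{y' \<in> Y. g y' \<noteq> g y}" Q] assms(1) by simp
  next
    case False
    then have "P \<subseteq> {y' \<in> Y. g y' \<noteq> g y}"
      by (auto simp: P_def g_def nbrs_def edge_ind_def insert_commute)
    then show ?thesis
      using P_big card_mono[of "{y' \<in> Y. g y' \<noteq> g y}" P] assms(1) by simp
  qed
qed

text \<open>The factor \<open>1 / 15\<close> comes from \<open>min (card A) (card (V - A)) \<ge> card A / 2 \<ge> d / 200\<close>.\<close>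

lemma pair_anticoncentration:
  fixes F G :: "nat set set" and a a' p p' d :: nat
  assumes fin: "finite V" "finite Y" "card V = card Y"
    and guest: "0.01 * d \<le> card (nbrs F V a - nbrs F V a')"
      "card (nbrs F V a - nbrs F V a') \<le> 2 / 3 * card V"
    and host: "\<bar>real (deg G Y p) - real (deg G Y p')\<bar> \<le> 0.00002 * card Y"
      "0.02 * card Y \<le> card (nbrs G Y p \<union> nbrs G Y p' - nbrs G Y p \<inter> nbrs G Y p')"
  shows "card (bijections V Y) * (13 / 64 * 0.009 / 15 * sqrt d)
    \<le> (\<Sum>\<sigma>\<in>bijections V Y. \<bar>lin_stat V (\<lambda>b. edge_ind F a b - edge_ind F a' b)
          (\<lambda>y. edge_ind G p' y - edge_ind G p y) \<sigma> - K\<bar>)"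
proof -
  define \<chi> where "\<chi> = (\<lambda>b. edge_ind F a b - edge_ind F a' b)"
  define g where "g = (\<lambda>y. edge_ind G p' y - edge_ind G p y)"
  define A where "A = nbrs F V a - nbrs F V a'"
  have "A \<subseteq> V"
    by (auto simp: A_def nbrs_def)
  have \<chi>_gap: "1 \<le> \<bar>\<chi> b - \<chi> b'\<bar>" if "b \<in> A" "b' \<in> V - A" for b b'
    using that by (auto simp: A_def nbrs_def \<chi>_def edge_ind_def)
  have g_gap: "1 \<le> \<bar>g y - g y'\<bar>" if "g y \<noteq> g y'" for y y'
    using that by (auto simp: g_def edge_ind_def split: if_splits)
  have spread: "0.009 * card Y \<le> card {y' \<in> Y. g y' \<noteq> g y}" for y
    using host_pair_spread[OF fin(2) host] by (simp add: g_def)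
  have "card (bijections V Y) * (13 / 64 * 0.009 * sqrt (min (card A) (card (V - A))))
      \<le> (\<Sum>\<sigma>\<in>bijections V Y. \<bar>lin_stat V \<chi> g \<sigma> - K\<bar>)"
    using lin_stat_anticoncentration[OF fin \<open>A \<subseteq> V\<close> \<chi>_gap g_gap _ spread] by simp
  moreover have "sqrt d / 15 \<le> sqrt (min (card A) (card (V - A)))"
  proof -
    have "card (V - A) = card V - card A" "card A \<le> card V"
      using \<open>A \<subseteq> V\<close> fin(1) by (simp_all add: card_Diff_subset finite_subset card_mono)
    then have "d / 225 \<le> min (card A) (card (V - A))"
      using guest by (simp add: A_def)
    then have "sqrt (d / 225) \<le> sqrt (min (card A) (card (V - A)))"
      by (rule real_sqrt_le_mono)
    moreover have "sqrt 225 = (15 :: real)"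
      by (rule real_sqrt_unique) simp_all
    ultimately show ?thesis
      by (simp add: real_sqrt_divide)
  qed
  then have "card (bijections V Y) * (13 / 64 * 0.009 / 15 * sqrt d)
      \<le> card (bijections V Y) * (13 / 64 * 0.009 * sqrt (min (card A) (card (V - A))))"
    by (intro mult_left_mono) auto
  ultimately show ?thesis
    unfolding \<chi>_def g_def by linarith
qed

lemma partition_half:
  assumes "U \<union> V = {..<n}" "U \<inter> V = {}" "card U = n div 2"
  shows "finite U" "finite V" "card V = n - n div 2"
proof -
  show "finite U" "finite V"
    using assms(1) finite_lessThan[of n] by (metis finite_Un)+
  then show "card V = n - n div 2"
    using card_Un_disjoint[of U V] assms by simp
qed

lemma guest_good_pairs:
  assumes "guest_good n F t"
  obtains U V m u u' d where "U \<union> V = {..<n}" "U \<inter> V = {}" "card U = n div 2"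
    "real m \<le> 0.05 * real n" "pairing u u' {..<m}" "u ` {..<m} \<union> u' ` {..<m} \<subseteq> U"
    "t = (\<Sum>i<m. sqrt (real (d i)))"
    "\<And>i. i < m \<Longrightarrow> 0.01 * real (d i) \<le> card (nbrs F V (u i) - nbrs F V (u' i))"
    "\<And>i. i < m \<Longrightarrow> card (nbrs F V (u i) - nbrs F V (u' i)) \<le> 2 / 3 * card V"
  apply (insert assms[unfolded guest_good_def])
  apply (elim exE conjE)
  subgoal for U V m u u' d
    by (rule that[of U V m u u' d]) (auto intro: pairing_if_distinct[OF _ order_refl])
  done

lemma host_good_pairs:
  assumes "host_good n \<beta> G" "real m \<le> 0.05 * real n"
  obtains X Y x x' where "X \<union> Y = {..<n}" "X \<inter> Y = {}" "card X = n div 2"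
    "pairing x x' {..<m}" "x ` {..<m} \<union> x' ` {..<m} \<subseteq> X"
    "\<And>i. i < m \<Longrightarrow> \<bar>real (deg G Y (x i)) - real (deg G Y (x' i))\<bar> \<le> \<beta> * n"
    "\<And>i. i < m \<Longrightarrow>
      0.02 * card Y \<le> card (nbrs G Y (x i) \<union> nbrs G Y (x' i) - nbrs G Y (x i) \<inter> nbrs G Y (x' i))"
proof -
  have "int m \<le> \<lfloor>0.05 * real n\<rfloor>"
    using assms(2) by (simp add: le_floor_iff)
  then have "m \<le> nat \<lfloor>0.05 * real n\<rfloor>"
    by linarith
  show ?thesis
    apply (insert assms(1)[unfolded host_good_def Let_def])
    apply (elim exE conjE)
    subgoal for X Y x x'
      by (rule that[of X Y x x']) (use \<open>m \<le> _\<close> in \<open>auto intro: pairing_if_distinct\<close>)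
    done
qed

lemma guest_host_deviating_copy:
  assumes F: "simple_graph n F" and "guest_good n F t" "host_good n (1 / 100000) G"
  shows "\<exists>F0. is_copy n F F0 \<and> 1 / 100000 * t \<le> \<bar>real (card (F0 \<inter> G)) - real (card F) / 2\<bar>"
proof -
  obtain U V m u u' d where UV: "U \<union> V = {..<n}" "U \<inter> V = {}" "card U = n div 2"
    and "real m \<le> 0.05 * real n" and u: "pairing u u' {..<m}" "u ` {..<m} \<union> u' ` {..<m} \<subseteq> U"
    and t: "t = (\<Sum>i<m. sqrt (real (d i)))"
    and guest: "\<And>i. i < m \<Longrightarrow> 0.01 * real (d i) \<le> card (nbrs F V (u i) - nbrs F V (u' i))"
      "\<And>i. i < m \<Longrightarrow> card (nbrs F V (u i) - nbrs F V (u' i)) \<le> 2 / 3 * card V"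
    using guest_good_pairs[OF assms(2)] by metis
  obtain X Y x x' where XY: "X \<union> Y = {..<n}" "X \<inter> Y = {}" "card X = n div 2"
    and x: "pairing x x' {..<m}" "x ` {..<m} \<union> x' ` {..<m} \<subseteq> X"
    and host: "\<And>i. i < m \<Longrightarrow> \<bar>real (deg G Y (x i)) - real (deg G Y (x' i))\<bar> \<le> 1 / 100000 * n"
      "\<And>i. i < m \<Longrightarrow>
        0.02 * card Y \<le> card (nbrs G Y (x i) \<union> nbrs G Y (x' i) - nbrs G Y (x i) \<inter> nbrs G Y (x' i))"
    using host_good_pairs[OF assms(3) \<open>real m \<le> 0.05 * real n\<close>] by metis
  have fin: "finite U" "finite V" "finite X" "finite Y"
    and card_eq: "card U = card X" "card V = card Y" and "real n \<le> 2 * card Y"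
    using partition_half[OF UV] partition_half[OF XY] UV(3) XY(3) by simp_all
  obtain \<rho> where "bij_betw \<rho> U X" "\<And>i. i < m \<Longrightarrow> \<rho> (u i) = x i" "\<And>i. i < m \<Longrightarrow> \<rho> (u' i) = x' i"
    using bij_betw_extend_pairings[OF u(1) x(1) _ fin(1,3) card_eq(1) u(2) x(2)] by auto
  then interpret swap_embedding u u' x x' m n U V X Y \<rho> F G
    using u x UV XY F by unfold_locales (auto simp: pairing_def)
  define c where "c i = 13 / 64 * 0.009 / 15 * sqrt (real (d i))" for i
  have "card (bijections V Y) * c i \<le> (\<Sum>\<sigma>\<in>bijections V Y. \<bar>pair_stat i \<sigma> - K\<bar>)" if "i < m" for i K
    unfolding pair_stat_def c_def
    using \<open>real n \<le> 2 * card Y\<close> host[OF that] guest[OF that] fin card_eq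
    by (intro pair_anticoncentration) auto
  then obtain F0 where "is_copy n F F0" "(\<Sum>i<m. c i) / 4 \<le> \<bar>real (card (F0 \<inter> G)) - real (card F) / 2\<bar>"
    using exists_deviating_copy[OF card_eq(2)] by blast
  moreover have "1 / 100000 * t \<le> (\<Sum>i<m. c i) / 4"
    unfolding t c_def by (simp add: sum_distrib_left sum_divide_distrib sum_mono)
  ultimately show ?thesis
    by force
qed

theorem lemma2p7:
  shows "\<exists>\<beta>::real. \<beta> > 0 \<and> (\<exists>n0::nat. \<forall>n\<ge>n0. \<forall>F G (t::real).
           simple_graph n F \<longrightarrow> simple_graph n G \<longrightarrow>
           guest_good n F t \<longrightarrow> host_good n \<beta> G \<longrightarrow>
           (\<exists>F0. is_copy n F F0 \<and>
              \<bar>real (card (F0 \<inter> G)) - real (card F) / 2\<bar> \<ge> \<beta> * t))"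
  using guest_host_deviating_copy by (intro exI[of _ "1 / 100000"] conjI exI[of _ 0]) auto

end
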